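(* Let all types below carry change structures (value type $V$, change type $D$, $\oplus:V\to D\to V$, $\ominus:V\to V\to D$, with $x\oplus(y\ominus x)=y$), products carrying the componentwise change structure. Each of the following triples $(C,i,d)$ is a value preserving incrementalization of the indicated function $f$: (1) (Triv) For any $f:A\to B$: $C=A$, $i\,x=(f\,x,x)$, $d\,x'\,x=(f(x\oplus x')\ominus f\,x,\ x\oplus x')$. (2) (Self) For $f:A\to B$ and $d_0:A'\to B'$ with $f(x\oplus x')=f\,x\oplus d_0\,x'$ for all $x,x'$: $C=\mathsf{Unit}$, $i\,x=(f\,x,\star)$, $d\,x'\,\star=(d_0\,x',\star)$. (3) (Lin) For $f:A\to B$ with $A=A'$, $B=B'$ and $f(x\oplus x')=f\,x\oplus f\,x'$ for all $x,x'$: $C=\mathsf{Unit}$, $i\,x=(f\,x,\star)$, $d\,x'\,\star=(f\,x',\star)$. (4) (BiLin) For $f:A\times B\to C_0$ with $A=A'$, $B=B'$, $C_0=C_0'$, such that $f(x\oplus x',y)=f(x,y)\oplus f(x',y)$ and $f(x,y\oplus y')=f(x,y)\oplus f(x,y')$ for all $x,x',y,y'$, and $\oplus$ on $C_0$ is commutative and associative: $C=A\times B$, $i(x,y)=(f(x,y),(x,y))$, $d\,(x',y')\,(x,y)=(f(x',y')\oplus f(x',y)\oplus f(x,y'),\ (x\oplus x',y\oplus y'))$. (5) (Add) For a type $A$ with $A=A'$ and $\oplus$ commutative and associative on $A$, and $f:A\times A\to A$, $f(x,y)=x\oplus y$: $C=\mathsf{Unit}$, $i(x,y)=(x\oplus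 y,\star)$, $d\,(x',y')\,\star=(x'\oplus y',\star)$.
   Context: For a function $f:A\to B$ between change structures (writing $A'$, $B'$ for the change types), an incrementalization is a triple $(C,i,d)$ with $C$ a type, $i:A\to B\times C$, $d:A'\to C\to B'\times C$. "$A=A'$" means the change type of $A$ equals its value type, so $\oplus:A\to A\to A$. Define $\mathsf{iter}\,(C,i,d)\,x\,[\,]=i\,x$ and $\mathsf{iter}\,(C,i,d)\,x\,(x'::xs')=(y\oplus y',c_2)$ where $(y,c_1)=\mathsf{iter}\,(C,i,d)\,x\,xs'$ and $(y',c_2)=d\,x'\,c_1$; and $\mathsf{sum}\,x\,[\,]=x$, $\mathsf{sum}\,x\,(x'::xs')=(\mathsf{sum}\,x\,xs')\oplus x'$. The incrementalization is value preserving for $f$ if $(\mathsf{iter}\,(C,i,d)\,x\,xs')_1=f(\mathsf{sum}\,x\,xs')$ for all $x\in A$ and all finite lists $xs'$ of changes. $\star$ denotes the element of $\mathsf{Unit}$. *)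

theory Defs
  imports Main
begin

definition change_structure :: "('v \<Rightarrow> 'd \<Rightarrow> 'v) \<Rightarrow> ('v \<Rightarrow> 'v \<Rightarrow> 'd) \<Rightarrow> bool" where
  "change_structure p m \<longleftrightarrow> (\<forall>x y. p x (m y x) = y)"

definition prod_oplus :: "('a \<Rightarrow> 'a' \<Rightarrow> 'a) \<Rightarrow> ('b \<Rightarrow> 'b' \<Rightarrow> 'b)
    \<Rightarrow> ('a \<times> 'b) \<Rightarrow> ('a' \<times> 'b') \<Rightarrow> ('a \<times> 'b)" where
  "prod_oplus pA pB = (\<lambda>(x, y) (x', y'). (pA x x', pB y y'))"

definition prod_ominus :: "('a \<Rightarrow> 'a \<Rightarrow> 'a') \<Rightarrow> ('b \<Rightarrow> 'b \<Rightarrow> 'b')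
    \<Rightarrow> ('a \<times> 'b) \<Rightarrow> ('a \<times> 'b) \<Rightarrow> ('a' \<times> 'b')" where
  "prod_ominus mA mB = (\<lambda>(x, y) (x', y'). (mA x x', mB y y'))"

text \<open>iter, parametrised by the oplus of the result type B; an incrementalization
  (C,i,d) is represented by the pair of functions i and d (C is their type).\<close>

fun iter :: "('b \<Rightarrow> 'b' \<Rightarrow> 'b) \<Rightarrow> ('a \<Rightarrow> 'b \<times> 'c) \<Rightarrow> ('a' \<Rightarrow> 'c \<Rightarrow> 'b' \<times> 'c)
    \<Rightarrow> 'a \<Rightarrow> 'a' list \<Rightarrow> 'b \<times> 'c" where
  "iter pB i d x [] = i x"
| "iter pB i d x (x' # xs') =
     (let (y, c1) = iter pB i d x xs'; (y', c2) = d x' c1 in (pB y y', c2))"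

fun sumc :: "('a \<Rightarrow> 'a' \<Rightarrow> 'a) \<Rightarrow> 'a \<Rightarrow> 'a' list \<Rightarrow> 'a" where
  "sumc pA x [] = x"
| "sumc pA x (x' # xs') = pA (sumc pA x xs') x'"

definition value_preserving ::
  "('a \<Rightarrow> 'a' \<Rightarrow> 'a) \<Rightarrow> ('b \<Rightarrow> 'b' \<Rightarrow> 'b) \<Rightarrow> ('a \<Rightarrow> 'b)
    \<Rightarrow> ('a \<Rightarrow> 'b \<times> 'c) \<Rightarrow> ('a' \<Rightarrow> 'c \<Rightarrow> 'b' \<times> 'c) \<Rightarrow> bool" where
  "value_preserving pA pB f i d \<longleftrightarrow>
     (\<forall>x xs'. fst (iter pB i d x xs') = f (sumc pA x xs'))"

definition comm_assoc :: "('a \<Rightarrow> 'a \<Rightarrow> 'a) \<Rightarrow> bool" where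
  "comm_assoc p \<longleftrightarrow> (\<forall>a b. p a b = p b a) \<and> (\<forall>a b c. p (p a b) c = p a (p b c))"

end

theory Submission
  imports Defs
begin

text \<open>Each of the five incrementalizations keeps its cache equal to a function g of the
  accumulated input (the input itself for Triv and BiLin, the unit value otherwise).
  So it suffices to check one step: starting from the cache g x, the change produced
  by d for x' must carry f x to f (x \<oplus> x'), and the new cache must be g (x \<oplus> x').
  For Triv this is the law x \<oplus> (y \<ominus> x) = y of the result type; for Self and Lin
  it is the hypothesis; for BiLin and Add it is an expansion of f (x \<oplus> x', y \<oplus> y')
  rearranged by commutativity and associativity.\<close>

lemma iter_eq_of_cache_invariant:
  assumes init: "\<And>x. i x = (f x, g x)"
    and step_value: "\<And>x x'. pB (f x) (fst (d x' (g x))) = f (pA x x')"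
    and step_cache: "\<And>x x'. snd (d x' (g x)) = g (pA x x')"
  shows "iter pB i d x xs = (f (sumc pA x xs), g (sumc pA x xs))"
proof (induction xs)
  case Nil
  show ?case by (simp add: init)
next
  case (Cons x' xs)
  then show ?case
    using step_value step_cache by (simp add: split_beta)
qed

lemma value_preserving_of_cache_invariant:
  assumes "\<And>x. i x = (f x, g x)"
    and "\<And>x x'. pB (f x) (fst (d x' (g x))) = f (pA x x')"
    and "\<And>x x'. snd (d x' (g x)) = g (pA x x')"
  shows "value_preserving pA pB f i d"
  unfolding value_preserving_def
  using iter_eq_of_cache_invariant[of i f g pB d pA, OF assms] by simp

lemma abel_semigroup_if_comm_assoc: "comm_assoc p \<Longrightarrow> abel_semigroup p"
  unfolding comm_assoc_def by unfold_locales auto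

lemma value_preserving_triv:
  assumes "change_structure pB mB"
  shows "value_preserving pA pB f (\<lambda>x. (f x, x)) (\<lambda>x' x. (mB (f (pA x x')) (f x), pA x x'))"
  using assms
  by (intro value_preserving_of_cache_invariant[where g = id]) (simp_all add: change_structure_def)

lemma value_preserving_self:
  assumes "\<And>x x'. f (pA x x') = pB (f x) (d0 x')"
  shows "value_preserving pA pB f (\<lambda>x. (f x, ())) (\<lambda>x' (_::unit). (d0 x', ()))"
  using assms
  by (intro value_preserving_of_cache_invariant[where g = "\<lambda>_. ()"]) simp_all

lemma bilinear_expand:
  assumes "comm_assoc pC"
    and left: "\<And>x x' y. f (pA x x', y) = pC (f (x, y)) (f (x', y))"
    and right: "\<And>x y y'. f (x, pB y y') = pC (f (x, y)) (f (x, y'))"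
  shows "f (pA x x', pB y y') = pC (f (x, y)) (pC (pC (f (x', y')) (f (x', y))) (f (x, y')))"
proof -
  interpret abel_semigroup pC
    using abel_semigroup_if_comm_assoc[OF assms(1)] .
  have "f (pA x x', pB y y') = pC (pC (f (x, y)) (f (x', y))) (pC (f (x, y')) (f (x', y')))"
    by (simp add: left right)
  then show ?thesis
    by (simp add: ac_simps)
qed

lemma value_preserving_bilinear:
  assumes "comm_assoc pC"
    and "\<And>x x' y. f (pA x x', y) = pC (f (x, y)) (f (x', y))"
    and "\<And>x y y'. f (x, pB y y') = pC (f (x, y)) (f (x, y'))"
  shows "value_preserving (prod_oplus pA pB) pC f (\<lambda>(x, y). (f (x, y), (x, y)))
    (\<lambda>(x', y') (x, y). (pC (pC (f (x', y')) (f (x', y))) (f (x, y')), (pA x x', pB y y')))"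
  by (intro value_preserving_of_cache_invariant[where g = id])
    (auto simp: prod_oplus_def bilinear_expand[OF assms])

lemma value_preserving_add:
  assumes "comm_assoc pA"
  shows "value_preserving (prod_oplus pA pA) pA (\<lambda>(x, y). pA x y)
    (\<lambda>(x, y). (pA x y, ())) (\<lambda>(x', y') (_::unit). (pA x' y', ()))"
proof -
  interpret abel_semigroup pA
    using abel_semigroup_if_comm_assoc[OF assms] .
  show ?thesis
    by (intro value_preserving_of_cache_invariant[where g = "\<lambda>_. ()"])
      (auto simp: prod_oplus_def ac_simps)
qed

theorem theorem5p7:
  shows
  \<comment> \<open>(1) Triv\<close>
  "(\<forall>(pA :: 'a1 \<Rightarrow> 'a1' \<Rightarrow> 'a1) mA (pB :: 'b1 \<Rightarrow> 'b1' \<Rightarrow> 'b1) mB (f :: 'a1 \<Rightarrow> 'b1).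
      change_structure pA mA \<and> change_structure pB mB \<longrightarrow>
      value_preserving pA pB f (\<lambda>x. (f x, x)) (\<lambda>x' x. (mB (f (pA x x')) (f x), pA x x')))
   \<and>
  \<comment> \<open>(2) Self\<close>
   (\<forall>(pA :: 'a2 \<Rightarrow> 'a2' \<Rightarrow> 'a2) mA (pB :: 'b2 \<Rightarrow> 'b2' \<Rightarrow> 'b2) mB (f :: 'a2 \<Rightarrow> 'b2) d0.
      change_structure pA mA \<and> change_structure pB mB \<and>
      (\<forall>x x'. f (pA x x') = pB (f x) (d0 x')) \<longrightarrow>
      value_preserving pA pB f (\<lambda>x. (f x, ())) (\<lambda>x' (_::unit). (d0 x', ())))
   \<and>
  \<comment> \<open>(3) Lin\<close>
   (\<forall>(pA :: 'a3 \<Rightarrow> 'a3 \<Rightarrow> 'a3) mA (pB :: 'b3 \<Rightarrow> 'b3 \<Rightarrow> 'b3) mB (f :: 'a3 \<Rightarrow> 'b3).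
      change_structure pA mA \<and> change_structure pB mB \<and>
      (\<forall>x x'. f (pA x x') = pB (f x) (f x')) \<longrightarrow>
      value_preserving pA pB f (\<lambda>x. (f x, ())) (\<lambda>x' (_::unit). (f x', ())))
   \<and>
  \<comment> \<open>(4) BiLin\<close>
   (\<forall>(pA :: 'a4 \<Rightarrow> 'a4 \<Rightarrow> 'a4) mA (pB :: 'b4 \<Rightarrow> 'b4 \<Rightarrow> 'b4) mB
       (pC :: 'c4 \<Rightarrow> 'c4 \<Rightarrow> 'c4) mC (f :: 'a4 \<times> 'b4 \<Rightarrow> 'c4).
      change_structure pA mA \<and> change_structure pB mB \<and> change_structure pC mC \<and>
      (\<forall>x x' y. f (pA x x', y) = pC (f (x, y)) (f (x', y))) \<and>
      (\<forall>x y y'. f (x, pB y y') = pC (f (x, y)) (f (x, y'))) \<and>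
      comm_assoc pC \<longrightarrow>
      value_preserving (prod_oplus pA pB) pC f (\<lambda>(x, y). (f (x, y), (x, y)))
        (\<lambda>(x', y') (x, y). (pC (pC (f (x', y')) (f (x', y))) (f (x, y')), (pA x x', pB y y'))))
   \<and>
  \<comment> \<open>(5) Add\<close>
   (\<forall>(pA :: 'a5 \<Rightarrow> 'a5 \<Rightarrow> 'a5) mA.
      change_structure pA mA \<and> comm_assoc pA \<longrightarrow>
      value_preserving (prod_oplus pA pA) pA (\<lambda>(x, y). pA x y)
        (\<lambda>(x, y). (pA x y, ())) (\<lambda>(x', y') (_::unit). (pA x' y', ())))"
  by (intro conjI allI impI; elim conjE;
      rule value_preserving_triv value_preserving_self
        value_preserving_bilinear value_preserving_add; simp)

end
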